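(* Let $G$ be a finite primitive permutation group of O'Nan–Scott type $\mathrm{HA}$, $\mathrm{HS}$, $\mathrm{HC}$, $\mathrm{TW}$, $\mathrm{SD}$ or $\mathrm{CD}$, and let $M$ be a point stabilizer of $G$. Then $M$ is a perfect code of $G$.
   Context: All groups are finite. For a group $G$ with identity $e$ and an inverse-closed subset $S\subseteq G\setminus\{e\}$, the Cayley graph $\mathrm{Cay}(G,S)$ has vertex set $G$ and edges $\{g,sg\}$ for $s\in S$, $g\in G$. A perfect code in a graph is a set $C$ of vertices that is independent and such that every vertex outside $C$ is adjacent to exactly one vertex of $C$. A subset (in particular a subgroup) $C$ of a group $G$ is called a perfect code of $G$ if there is a Cayley graph $\mathrm{Cay}(G,S)$ of $G$ in which $C$ is a perfect code. The types $\mathrm{HA},\mathrm{HS},\mathrm{HC},\mathrm{TW},\mathrm{SD},\mathrm{CD},\mathrm{AS},\mathrm{PA}$ of primitive groups are those of the O'Nan–Scott classification (e.g. as in Praeger, 1997). *)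

theory Defs
  imports "HOL-Algebra.Algebra"
begin

definition primitive_action :: "('a, 'c) monoid_scheme \<Rightarrow> 'b set \<Rightarrow> ('a \<Rightarrow> 'b \<Rightarrow> 'b) \<Rightarrow> bool" where
  "primitive_action G \<Omega> \<phi> \<longleftrightarrow>
     group_action G \<Omega> \<phi> \<and> inj_on \<phi> (carrier G) \<and> \<Omega> \<noteq> {} \<and>
     (\<forall>x\<in>\<Omega>. \<forall>y\<in>\<Omega>. \<exists>g\<in>carrier G. \<phi> g x = y) \<and>
     (\<forall>B. B \<subseteq> \<Omega> \<and> B \<noteq> {} \<and>
          (\<forall>g\<in>carrier G. \<phi> g ` B = B \<or> \<phi> g ` B \<inter> B = {})
          \<longrightarrow> (\<exists>x. B = {x}) \<or> B = \<Omega>)"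

definition minimal_normal :: "('a, 'c) monoid_scheme \<Rightarrow> 'a set \<Rightarrow> bool" where
  "minimal_normal G N \<longleftrightarrow> N \<lhd> G \<and> N \<noteq> {\<one>\<^bsub>G\<^esub>} \<and>
     (\<forall>K. K \<lhd> G \<and> K \<subseteq> N \<longrightarrow> K = {\<one>\<^bsub>G\<^esub>} \<or> K = N)"

definition abelian_set :: "('a, 'c) monoid_scheme \<Rightarrow> 'a set \<Rightarrow> bool" where
  "abelian_set G N \<longleftrightarrow> (\<forall>x\<in>N. \<forall>y\<in>N. x \<otimes>\<^bsub>G\<^esub> y = y \<otimes>\<^bsub>G\<^esub> x)"

definition regular_on :: "('a, 'c) monoid_scheme \<Rightarrow> 'b set \<Rightarrow> ('a \<Rightarrow> 'b \<Rightarrow> 'b) \<Rightarrow> 'a set \<Rightarrow> bool" where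
  "regular_on G \<Omega> \<phi> N \<longleftrightarrow> (\<forall>x\<in>\<Omega>. \<forall>y\<in>\<Omega>. \<exists>!g. g \<in> N \<and> \<phi> g x = y)"

definition centralizer_in :: "('a, 'c) monoid_scheme \<Rightarrow> 'a set \<Rightarrow> 'a set \<Rightarrow> 'a set" where
  "centralizer_in G N T = {x\<in>N. \<forall>t\<in>T. x \<otimes>\<^bsub>G\<^esub> t = t \<otimes>\<^bsub>G\<^esub> x}"

(* the simple direct factors of N = T^k (N nonabelian characteristically simple):
   the minimal normal subgroups of N *)
definition simple_factors :: "('a, 'c) monoid_scheme \<Rightarrow> 'a set \<Rightarrow> 'a set set" where
  "simple_factors G N = {T. minimal_normal (G\<lparr>carrier := N\<rparr>) T}"

(* D is a full diagonal subgroup of N = T_1 x ... x T_k: D \<le> N and the projection of D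
   onto each factor T_i (whose kernel on N is the centralizer of T_i in N) is an isomorphism *)
definition full_diagonal :: "('a, 'c) monoid_scheme \<Rightarrow> 'a set \<Rightarrow> 'a set \<Rightarrow> bool" where
  "full_diagonal G N D \<longleftrightarrow> subgroup D G \<and> D \<subseteq> N \<and>
     (\<forall>T\<in>simple_factors G N.
        D \<inter> centralizer_in G N T = {\<one>\<^bsub>G\<^esub>} \<and> D <#>\<^bsub>G\<^esub> centralizer_in G N T = N)"

definition unique_minimal_normal :: "('a, 'c) monoid_scheme \<Rightarrow> 'a set \<Rightarrow> bool" where
  "unique_minimal_normal G N \<longleftrightarrow> minimal_normal G N \<and> (\<forall>K. minimal_normal G K \<longrightarrow> K = N)"

definition two_minimal_normal :: "('a, 'c) monoid_scheme \<Rightarrow> 'a set \<Rightarrow> 'a set \<Rightarrow> bool" where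
  "two_minimal_normal G N1 N2 \<longleftrightarrow> N1 \<noteq> N2 \<and> minimal_normal G N1 \<and> minimal_normal G N2 \<and>
     (\<forall>K. minimal_normal G K \<longrightarrow> K = N1 \<or> K = N2)"

definition type_HA :: "('a, 'c) monoid_scheme \<Rightarrow> 'b set \<Rightarrow> ('a \<Rightarrow> 'b \<Rightarrow> 'b) \<Rightarrow> bool" where
  "type_HA G \<Omega> \<phi> \<longleftrightarrow> (\<exists>N. unique_minimal_normal G N \<and> abelian_set G N \<and> regular_on G \<Omega> \<phi> N)"

definition type_HS :: "('a, 'c) monoid_scheme \<Rightarrow> 'b set \<Rightarrow> ('a \<Rightarrow> 'b \<Rightarrow> 'b) \<Rightarrow> bool" where
  "type_HS G \<Omega> \<phi> \<longleftrightarrow> (\<exists>N1 N2. two_minimal_normal G N1 N2 \<and>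
     \<not> abelian_set G N1 \<and> \<not> abelian_set G N2 \<and>
     simple_group (G\<lparr>carrier := N1\<rparr>) \<and> simple_group (G\<lparr>carrier := N2\<rparr>) \<and>
     regular_on G \<Omega> \<phi> N1 \<and> regular_on G \<Omega> \<phi> N2)"

definition type_HC :: "('a, 'c) monoid_scheme \<Rightarrow> 'b set \<Rightarrow> ('a \<Rightarrow> 'b \<Rightarrow> 'b) \<Rightarrow> bool" where
  "type_HC G \<Omega> \<phi> \<longleftrightarrow> (\<exists>N1 N2. two_minimal_normal G N1 N2 \<and>
     \<not> abelian_set G N1 \<and> \<not> abelian_set G N2 \<and>
     \<not> simple_group (G\<lparr>carrier := N1\<rparr>) \<and> \<not> simple_group (G\<lparr>carrier := N2\<rparr>) \<and>
     regular_on G \<Omega> \<phi> N1 \<and> regular_on G \<Omega> \<phi> N2)"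

definition type_TW :: "('a, 'c) monoid_scheme \<Rightarrow> 'b set \<Rightarrow> ('a \<Rightarrow> 'b \<Rightarrow> 'b) \<Rightarrow> bool" where
  "type_TW G \<Omega> \<phi> \<longleftrightarrow> (\<exists>N. unique_minimal_normal G N \<and> \<not> abelian_set G N \<and>
     \<not> simple_group (G\<lparr>carrier := N\<rparr>) \<and> regular_on G \<Omega> \<phi> N)"

definition type_SD :: "('a, 'c) monoid_scheme \<Rightarrow> 'b set \<Rightarrow> ('a \<Rightarrow> 'b \<Rightarrow> 'b) \<Rightarrow> bool" where
  "type_SD G \<Omega> \<phi> \<longleftrightarrow> (\<exists>N. unique_minimal_normal G N \<and> \<not> abelian_set G N \<and>
     \<not> simple_group (G\<lparr>carrier := N\<rparr>) \<and>
     (\<exists>\<alpha>\<in>\<Omega>. full_diagonal G N (N \<inter> stabilizer G \<phi> \<alpha>)))"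

(* CD: N = T^k = (T^m)^l with l \<ge> 2, m \<ge> 2, and N_alpha = D_1 x ... x D_l where D_j is a full
   diagonal subgroup of the j-th T^m; the l copies of T^m are given by a partition P of the
   simple factors of N into l blocks of size m. *)
definition type_CD :: "('a, 'c) monoid_scheme \<Rightarrow> 'b set \<Rightarrow> ('a \<Rightarrow> 'b \<Rightarrow> 'b) \<Rightarrow> bool" where
  "type_CD G \<Omega> \<phi> \<longleftrightarrow> (\<exists>N. unique_minimal_normal G N \<and> \<not> abelian_set G N \<and>
     (\<exists>\<alpha>\<in>\<Omega>. \<exists>P D m.
        disjoint P \<and> \<Union>P = simple_factors G N \<and> card P \<ge> 2 \<and> m \<ge> 2 \<and>
        (\<forall>B\<in>P. card B = m \<and> full_diagonal G (generate G (\<Union>B)) (D B)) \<and>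
        N \<inter> stabilizer G \<phi> \<alpha> = generate G (\<Union>B\<in>P. D B)))"

definition cayley_adj :: "('a, 'c) monoid_scheme \<Rightarrow> 'a set \<Rightarrow> 'a \<Rightarrow> 'a \<Rightarrow> bool" where
  "cayley_adj G S g h \<longleftrightarrow> (\<exists>s\<in>S. h = s \<otimes>\<^bsub>G\<^esub> g)"

definition perfect_code_cayley :: "('a, 'c) monoid_scheme \<Rightarrow> 'a set \<Rightarrow> 'a set \<Rightarrow> bool" where
  "perfect_code_cayley G S C \<longleftrightarrow> C \<subseteq> carrier G \<and>
     (\<forall>c\<in>C. \<forall>c'\<in>C. c \<noteq> c' \<longrightarrow> \<not> cayley_adj G S c c') \<and>
     (\<forall>g\<in>carrier G - C. \<exists>!c. c \<in> C \<and> cayley_adj G S g c)"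

definition perfect_code_of_group :: "('a, 'c) monoid_scheme \<Rightarrow> 'a set \<Rightarrow> bool" where
  "perfect_code_of_group G C \<longleftrightarrow>
     (\<exists>S. S \<subseteq> carrier G - {\<one>\<^bsub>G\<^esub>} \<and> (\<forall>s\<in>S. inv\<^bsub>G\<^esub> s \<in> S) \<and> perfect_code_cayley G S C)"

end

theory Submission
  imports Defs
begin

(*
  If a subgroup H of G has a complement K (that is, K H = G and K \<inter> H = 1), then H is a perfect
  code: in the Cayley graph with connection set K - {1}, an element g = k h outside H is adjacent
  to h and to no other element of H. A point stabilizer G\<^sub>\<alpha> has such a complement as soon as
  some subgroup K acts regularly. In types HA, HS, HC and TW a minimal normal subgroup is regular.
  In types SD and CD the minimal normal subgroup N is transitive, as every nontrivial normal
  subgroup of a primitive group is, and N\<^sub>\<alpha> is a product of full diagonal subgroups D\<^sub>B of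
  the subgroups N\<^sub>B generated by the blocks B of simple factors. The centralizer in N\<^sub>B of a
  simple factor of N\<^sub>B complements D\<^sub>B, and since the N\<^sub>B commute and intersect trivially
  (such an intersection is an abelian normal subgroup of N, hence trivial), the product of these
  centralizers complements N\<^sub>\<alpha> in N and therefore acts regularly.
*)

section \<open>Perfect codes from complements\<close>

definition complements :: "('a, 'c) monoid_scheme \<Rightarrow> 'a set \<Rightarrow> 'a set \<Rightarrow> 'a set \<Rightarrow> bool" where
  "complements G N D C \<longleftrightarrow> subgroup D G \<and> subgroup C G \<and> D <#>\<^bsub>G\<^esub> C = N \<and> D \<inter> C = {\<one>\<^bsub>G\<^esub>}"

context group begin

lemma mult_inv_cancel_left [simp]: "x \<in> carrier G \<Longrightarrow> y \<in> carrier G \<Longrightarrow> x \<otimes> (inv x \<otimes> y) = y"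
  by (simp add: m_assoc[symmetric])

lemma inv_mult_cancel_left [simp]: "x \<in> carrier G \<Longrightarrow> y \<in> carrier G \<Longrightarrow> inv x \<otimes> (x \<otimes> y) = y"
  by (simp add: m_assoc[symmetric])

lemma set_multI: "h \<in> H \<Longrightarrow> k \<in> K \<Longrightarrow> h \<otimes> k \<in> H <#> K"
  unfolding set_mult_def by blast

lemma set_multE:
  assumes "x \<in> H <#> K" obtains h k where "h \<in> H" "k \<in> K" "x = h \<otimes> k"
  using assms unfolding set_mult_def by blast

lemma subset_set_mult_left: "subgroup H G \<Longrightarrow> subgroup K G \<Longrightarrow> H \<subseteq> H <#> K"
  using set_multI[of _ H \<one> K] subgroup.one_closed subgroup.mem_carrier by fastforce

lemma subset_set_mult_right: "subgroup H G \<Longrightarrow> subgroup K G \<Longrightarrow> K \<subseteq> H <#> K"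
  using set_multI[of \<one> H _ K] subgroup.one_closed subgroup.mem_carrier by fastforce

lemma complementsD:
  assumes "complements G N D C"
  shows "subgroup D G" "subgroup C G" "D <#> C = N" "D \<inter> C = {\<one>}" "D \<subseteq> N" "C \<subseteq> N"
  using assms subset_set_mult_left[of D C] subset_set_mult_right[of D C]
  unfolding complements_def by auto

lemma perfect_code_of_group_if_complement:
  assumes "complements G (carrier G) K H"
  shows "perfect_code_of_group G H"
proof -
  interpret H: subgroup H G using complementsD(2)[OF assms] .
  interpret K: subgroup K G using complementsD(1)[OF assms] .
  have disj: "K \<inter> H = {\<one>}" and prod: "K <#> H = carrier G" using complementsD(3,4)[OF assms] by auto
  define S where "S = K - {\<one>}"
  have S_carrier: "S \<subseteq> carrier G - {\<one>}" and S_inv: "\<forall>s\<in>S. inv s \<in> S"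
    unfolding S_def using inv_eq_1_iff by auto
  have independent: "\<not> cayley_adj G S c c'" if "c \<in> H" "c' \<in> H" "c \<noteq> c'" for c c'
  proof
    assume "cayley_adj G S c c'"
    then obtain s where s: "s \<in> S" "c' = s \<otimes> c" unfolding cayley_adj_def by blast
    then have "s = c' \<otimes> inv c" using that by (simp add: S_def m_assoc)
    then have "s \<in> K \<inter> H" using s(1) that by (simp add: S_def)
    then show False using disj s that by (auto simp: S_def)
  qed
  have unique_neighbour: "\<exists>!c. c \<in> H \<and> cayley_adj G S g c" if g: "g \<in> carrier G - H" for g
  proof -
    have "g \<in> K <#> H" using g prod by simp
    then obtain k h where kh: "k \<in> K" "h \<in> H" "g = k \<otimes> h" by (rule set_multE)
    have "k \<noteq> \<one>" using g kh by auto
    then have "inv k \<in> S" using kh(1) inv_eq_1_iff by (simp add: S_def)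
    moreover have "h = inv k \<otimes> g" using kh by (simp add: m_assoc[symmetric])
    ultimately have "h \<in> H \<and> cayley_adj G S g h"
      using kh(2) unfolding cayley_adj_def by blast
    moreover have "c = h" if c: "c \<in> H" "cayley_adj G S g c" for c
    proof -
      obtain s where s: "s \<in> S" "c = s \<otimes> g" using c(2) unfolding cayley_adj_def by blast
      have sK: "s \<in> K" using s(1) by (simp add: S_def)
      have "s \<otimes> k = c \<otimes> inv h" using s(2) kh sK by (simp add: m_assoc)
      then have "s \<otimes> k \<in> K \<inter> H" using sK kh c(1) by (metis IntI H.m_closed H.m_inv_closed K.m_closed)
      then have "s \<otimes> k = \<one>" using disj by blast
      then show "c = h" using s(2) kh sK by (simp add: m_assoc[symmetric])
    qed
    ultimately show ?thesis by blast
  qed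
  have "perfect_code_cayley G S H"
    unfolding perfect_code_cayley_def using independent unique_neighbour by auto
  then show ?thesis
    unfolding perfect_code_of_group_def using S_carrier S_inv by blast
qed

end

section \<open>Regular subgroups and point stabilizers\<close>

sublocale group_action \<subseteq> group G
  using group_hom group_hom.axioms(1) by auto

context group_action begin

lemma act_one [simp]: "x \<in> E \<Longrightarrow> \<phi> \<one> x = x"
  by (metis id_eq_one restrict_apply')

lemma act_closed: "g \<in> carrier G \<Longrightarrow> x \<in> E \<Longrightarrow> \<phi> g x \<in> E"
  using element_image by blast

lemma act_mult: "g \<in> carrier G \<Longrightarrow> h \<in> carrier G \<Longrightarrow> x \<in> E \<Longrightarrow> \<phi> (g \<otimes> h) x = \<phi> g (\<phi> h x)"
  using composition_rule by blast

lemma act_inv_act: "g \<in> carrier G \<Longrightarrow> x \<in> E \<Longrightarrow> \<phi> (inv g) (\<phi> g x) = x"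
  by (simp flip: act_mult)

lemma act_act_inv: "g \<in> carrier G \<Longrightarrow> x \<in> E \<Longrightarrow> \<phi> g (\<phi> (inv g) x) = x"
  by (simp flip: act_mult)

lemma regular_on_complements_stabilizer:
  assumes K: "subgroup K G" and reg: "regular_on G E \<phi> K" and \<alpha>: "\<alpha> \<in> E"
  shows "complements G (carrier G) K (stabilizer G \<phi> \<alpha>)"
proof -
  interpret K: subgroup K G by fact
  have unique: "\<exists>!k. k \<in> K \<and> \<phi> k \<alpha> = \<beta>" if "\<beta> \<in> E" for \<beta>
    using reg \<alpha> that unfolding regular_on_def by blast
  have "K \<inter> stabilizer G \<phi> \<alpha> \<subseteq> {\<one>}"
  proof
    fix k assume "k \<in> K \<inter> stabilizer G \<phi> \<alpha>"
    then have "k \<in> K" "\<phi> k \<alpha> = \<alpha>" unfolding stabilizer_def by auto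
    then show "k \<in> {\<one>}" using unique[OF \<alpha>] \<alpha> K.one_closed by (metis act_one singletonI)
  qed
  moreover have "carrier G \<subseteq> K <#> stabilizer G \<phi> \<alpha>"
  proof
    fix g assume g: "g \<in> carrier G"
    obtain k where k: "k \<in> K" "\<phi> k \<alpha> = \<phi> g \<alpha>"
      using unique[OF act_closed[OF g \<alpha>]] by auto
    have kc: "k \<in> carrier G" using k(1) by simp
    have "\<phi> (inv k \<otimes> g) \<alpha> = \<phi> (inv k) (\<phi> k \<alpha>)" using k(2) kc g \<alpha> by (simp add: act_mult)
    also have "\<dots> = \<alpha>" using kc \<alpha> by (rule act_inv_act)
    finally have "inv k \<otimes> g \<in> stabilizer G \<phi> \<alpha>" using kc g by (simp add: stabilizer_def)
    moreover have "g = k \<otimes> (inv k \<otimes> g)" using kc g by (simp add: m_assoc[symmetric])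
    ultimately show "g \<in> K <#> stabilizer G \<phi> \<alpha>" using k(1) set_multI by metis
  qed
  moreover have "K <#> stabilizer G \<phi> \<alpha> \<subseteq> carrier G"
    by (rule setmult_subset_G[OF K.subset stabilizer_subset])
  moreover have "\<one> \<in> K \<inter> stabilizer G \<phi> \<alpha>" using \<alpha> stabilizer_one_closed K.one_closed by blast
  ultimately show ?thesis
    unfolding complements_def using K stabilizer_subgroup[OF \<alpha>] by blast
qed

lemma perfect_code_stabilizer_if_regular:
  assumes "subgroup K G" "regular_on G E \<phi> K" "\<alpha> \<in> E"
  shows "perfect_code_of_group G (stabilizer G \<phi> \<alpha>)"
  by (rule perfect_code_of_group_if_complement[OF regular_on_complements_stabilizer[OF assms]])

lemma regular_onI:
  assumes K: "subgroup K G" and \<alpha>: "\<alpha> \<in> E"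
    and transitive: "\<And>\<beta>. \<beta> \<in> E \<Longrightarrow> \<exists>k\<in>K. \<phi> k \<alpha> = \<beta>"
    and free: "K \<inter> stabilizer G \<phi> \<alpha> = {\<one>}"
  shows "regular_on G E \<phi> K"
  unfolding regular_on_def
proof (intro ballI ex_ex1I)
  interpret K: subgroup K G by fact
  fix x y assume x: "x \<in> E" and y: "y \<in> E"
  obtain a where a: "a \<in> K" "x = \<phi> a \<alpha>" using transitive[OF x] by auto
  obtain b where b: "b \<in> K" "y = \<phi> b \<alpha>" using transitive[OF y] by auto
  have ac: "a \<in> carrier G" and bc: "b \<in> carrier G" using a b by simp_all
  show "\<exists>k. k \<in> K \<and> \<phi> k x = y"
  proof (intro exI conjI)
    show "b \<otimes> inv a \<in> K" using a b by simp
    show "\<phi> (b \<otimes> inv a) x = y" using a b ac bc \<alpha> by (simp add: act_mult act_closed act_inv_act)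
  qed
  fix k k' assume k: "k \<in> K \<and> \<phi> k x = y" and k': "k' \<in> K \<and> \<phi> k' x = y"
  have kc: "k \<in> carrier G" and k'c: "k' \<in> carrier G" using k k' by simp_all
  define c where "c = inv a \<otimes> (inv k' \<otimes> k) \<otimes> a"
  have "c \<in> K" unfolding c_def using a k k' by simp
  moreover have "\<phi> c \<alpha> = \<alpha>"
  proof -
    have "\<phi> c \<alpha> = \<phi> (inv a) (\<phi> (inv k') (\<phi> k x))"
      unfolding c_def a(2) using ac kc k'c \<alpha> by (simp add: act_mult act_closed)
    also have "\<dots> = \<phi> (inv a) x" using k k' act_inv_act[OF k'c x] by simp
    also have "\<dots> = \<alpha>" unfolding a(2) using ac \<alpha> by (rule act_inv_act)
    finally show ?thesis .
  qed
  ultimately have "c \<in> K \<inter> stabilizer G \<phi> \<alpha>" unfolding stabilizer_def by simp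
  then have "c = \<one>" using free by simp
  moreover have "inv k' \<otimes> k = a \<otimes> c \<otimes> inv a" unfolding c_def using ac kc k'c by (simp add: m_assoc)
  ultimately have "inv k' \<otimes> k = \<one>" using ac by simp
  then show "k = k'" using mult_inv_cancel_left[OF k'c kc] k'c by simp
qed

lemma regular_on_if_complement_of_stabilizer:
  assumes N: "subgroup N G" and \<alpha>: "\<alpha> \<in> E"
    and transitive: "\<And>\<beta>. \<beta> \<in> E \<Longrightarrow> \<exists>n\<in>N. \<phi> n \<alpha> = \<beta>"
    and complement: "complements G N (N \<inter> stabilizer G \<phi> \<alpha>) K"
  shows "regular_on G E \<phi> K"
proof (rule regular_onI[OF complementsD(2)[OF complement] \<alpha>])
  interpret N: subgroup N G by fact
  interpret K: subgroup K G using complementsD(2)[OF complement] .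
  have prod: "(N \<inter> stabilizer G \<phi> \<alpha>) <#> K = N" using complementsD(3)[OF complement] .
  show "K \<inter> stabilizer G \<phi> \<alpha> = {\<one>}"
    using complementsD(4,6)[OF complement] by blast
  fix \<beta> assume "\<beta> \<in> E"
  then obtain n where n: "n \<in> N" "\<phi> n \<alpha> = \<beta>" using transitive by blast
  then have "inv n \<in> (N \<inter> stabilizer G \<phi> \<alpha>) <#> K" using prod by simp
  then obtain d c where dc: "d \<in> N \<inter> stabilizer G \<phi> \<alpha>" "c \<in> K" "inv n = d \<otimes> c"
    by (rule set_multE)
  have d: "d \<in> carrier G" "\<phi> d \<alpha> = \<alpha>" using dc(1) unfolding stabilizer_def by auto
  have cc: "c \<in> carrier G" and nc: "n \<in> carrier G" using dc(2) n(1) by simp_all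
  have "n = inv c \<otimes> inv d" using dc(3) d(1) cc nc by (metis inv_inv inv_mult_group)
  moreover have "\<phi> (inv d) \<alpha> = \<alpha>" using act_inv_act[OF d(1) \<alpha>] d(2) by simp
  ultimately have "\<phi> (inv c) \<alpha> = \<beta>" using n(2) d(1) cc \<alpha> by (simp add: act_mult)
  then show "\<exists>k\<in>K. \<phi> k \<alpha> = \<beta>" using dc(2) by blast
qed

section \<open>Normal subgroups of primitive groups\<close>

lemma finite_carrier_if_faithful:
  assumes faithful: "inj_on \<phi> (carrier G)" and E: "finite E"
  shows "finite (carrier G)"
proof (rule finite_imageD[OF _ faithful])
  have "\<phi> g \<in> extensional_funcset E E" if "g \<in> carrier G" for g
    using bij_prop0[OF that] by (simp add: PiE_def Bij_imp_extensional Bij_imp_funcset)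
  then have "\<phi> ` carrier G \<subseteq> extensional_funcset E E" by blast
  then show "finite (\<phi> ` carrier G)" by (rule finite_subset) (simp add: E finite_PiE)
qed

lemma normal_subgroup_orbit_image:
  assumes N: "N \<lhd> G" and g: "g \<in> carrier G" and \<alpha>: "\<alpha> \<in> E"
  shows "\<phi> g ` (\<lambda>n. \<phi> n \<alpha>) ` N = (\<lambda>n. \<phi> n (\<phi> g \<alpha>)) ` N"
proof -
  interpret N: normal N G by fact
  show ?thesis
  proof
    show "\<phi> g ` (\<lambda>n. \<phi> n \<alpha>) ` N \<subseteq> (\<lambda>n. \<phi> n (\<phi> g \<alpha>)) ` N"
    proof (clarify)
      fix n assume n: "n \<in> N"
      have "\<phi> g (\<phi> n \<alpha>) = \<phi> (g \<otimes> n \<otimes> inv g) (\<phi> g \<alpha>)"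
        using n g \<alpha> by (simp add: act_mult act_closed act_inv_act m_assoc)
      then show "\<phi> g (\<phi> n \<alpha>) \<in> (\<lambda>n. \<phi> n (\<phi> g \<alpha>)) ` N"
        using N.inv_op_closed2[OF g n] by blast
    qed
    show "(\<lambda>n. \<phi> n (\<phi> g \<alpha>)) ` N \<subseteq> \<phi> g ` (\<lambda>n. \<phi> n \<alpha>) ` N"
    proof (clarify)
      fix m assume m: "m \<in> N"
      have "\<phi> m (\<phi> g \<alpha>) = \<phi> g (\<phi> (inv g \<otimes> m \<otimes> g) \<alpha>)"
        using m g \<alpha> by (simp add: act_mult act_closed act_act_inv m_assoc)
      then show "\<phi> m (\<phi> g \<alpha>) \<in> \<phi> g ` (\<lambda>n. \<phi> n \<alpha>) ` N"
        using N.inv_op_closed1[OF g m] by blast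
    qed
  qed
qed

lemma subgroup_orbit_subset:
  assumes N: "subgroup N G" and \<alpha>: "\<alpha> \<in> E" and c: "c \<in> N"
  shows "(\<lambda>n. \<phi> n (\<phi> c \<alpha>)) ` N \<subseteq> (\<lambda>n. \<phi> n \<alpha>) ` N"
proof -
  interpret N: subgroup N G by fact
  have "\<phi> n (\<phi> c \<alpha>) = \<phi> (n \<otimes> c) \<alpha>" if "n \<in> N" for n using that c \<alpha> by (simp add: act_mult)
  then show ?thesis using c by auto
qed

lemma subgroup_orbits_disjoint_or_eq:
  assumes N: "subgroup N G" and \<alpha>: "\<alpha> \<in> E" and \<beta>: "\<beta> \<in> E"
    and meet: "(\<lambda>n. \<phi> n \<alpha>) ` N \<inter> (\<lambda>n. \<phi> n \<beta>) ` N \<noteq> {}"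
  shows "(\<lambda>n. \<phi> n \<alpha>) ` N = (\<lambda>n. \<phi> n \<beta>) ` N"
proof -
  interpret N: subgroup N G by fact
  obtain a b where ab: "a \<in> N" "b \<in> N" "\<phi> a \<alpha> = \<phi> b \<beta>" using meet by auto
  have "\<beta> = \<phi> (inv b \<otimes> a) \<alpha>" using ab \<alpha> \<beta> by (simp add: act_mult act_inv_act)
  then have "(\<lambda>n. \<phi> n \<beta>) ` N \<subseteq> (\<lambda>n. \<phi> n \<alpha>) ` N"
    using subgroup_orbit_subset[OF N \<alpha>] ab by simp
  moreover have "\<alpha> = \<phi> (inv a \<otimes> b) \<beta>" using ab \<alpha> \<beta> by (simp add: act_mult act_inv_act flip: ab(3))
  then have "(\<lambda>n. \<phi> n \<alpha>) ` N \<subseteq> (\<lambda>n. \<phi> n \<beta>) ` N"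
    using subgroup_orbit_subset[OF N \<beta>] ab by simp
  ultimately show ?thesis by blast
qed

lemma normal_subgroup_fixing_point_trivial:
  assumes faithful: "inj_on \<phi> (carrier G)"
    and transitive: "\<And>\<beta>. \<beta> \<in> E \<Longrightarrow> \<exists>g\<in>carrier G. \<phi> g \<alpha> = \<beta>"
    and N: "N \<lhd> G" and \<alpha>: "\<alpha> \<in> E" and fixes_point: "\<And>n. n \<in> N \<Longrightarrow> \<phi> n \<alpha> = \<alpha>"
  shows "N = {\<one>}"
proof -
  interpret N: normal N G by fact
  have "\<phi> n = \<phi> \<one>" if n: "n \<in> N" for n
  proof (rule extensionalityI)
    show "\<phi> n \<in> extensional E" "\<phi> \<one> \<in> extensional E"
      using n by (simp_all add: Bij_imp_extensional bij_prop0)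
    fix \<beta> assume "\<beta> \<in> E"
    then obtain g where g: "g \<in> carrier G" "\<phi> g \<alpha> = \<beta>" using transitive by blast
    have nc: "n \<in> carrier G" using n by simp
    have "\<phi> n \<beta> = \<phi> g (\<phi> (inv g \<otimes> n \<otimes> g) \<alpha>)"
      unfolding g(2)[symmetric] using g(1) nc \<alpha> by (simp add: act_mult act_closed act_act_inv)
    also have "\<dots> = \<beta>" using fixes_point[OF N.inv_op_closed1[OF g(1) n]] g by simp
    finally show "\<phi> n \<beta> = \<phi> \<one> \<beta>" using \<open>\<beta> \<in> E\<close> by simp
  qed
  then have "n = \<one>" if "n \<in> N" for n
    using faithful N.mem_carrier[OF that] that unfolding inj_on_def by blast
  then show ?thesis using N.one_closed by blast
qed

end

lemma primitive_action_normal_subgroup_transitive: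
  assumes prim: "primitive_action G \<Omega> \<phi>" and N: "N \<lhd> G" and nontrivial: "N \<noteq> {\<one>\<^bsub>G\<^esub>}"
    and \<alpha>: "\<alpha> \<in> \<Omega>" and \<beta>: "\<beta> \<in> \<Omega>"
  shows "\<exists>n\<in>N. \<phi> n \<alpha> = \<beta>"
proof -
  interpret group_action G \<Omega> \<phi> using prim unfolding primitive_action_def by (elim conjE)
  interpret N: normal N G by fact
  have faithful: "inj_on \<phi> (carrier G)" using prim unfolding primitive_action_def by (elim conjE)
  have transitive: "\<exists>g\<in>carrier G. \<phi> g \<alpha> = \<gamma>" if "\<gamma> \<in> \<Omega>" for \<gamma>
    using prim \<alpha> that unfolding primitive_action_def by (elim conjE) blast
  have blocks: "(\<exists>x. B = {x}) \<or> B = \<Omega>"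
    if "B \<subseteq> \<Omega>" "B \<noteq> {}" "\<forall>g\<in>carrier G. \<phi> g ` B = B \<or> \<phi> g ` B \<inter> B = {}" for B
    using prim that unfolding primitive_action_def by (elim conjE) blast
  define B where "B = (\<lambda>n. \<phi> n \<alpha>) ` N"
  have \<alpha>B: "\<alpha> \<in> B" unfolding B_def using act_one[OF \<alpha>] N.one_closed by (metis image_eqI)
  have "B \<subseteq> \<Omega>" unfolding B_def using act_closed[OF N.mem_carrier \<alpha>] by blast
  moreover have "B \<noteq> {}" using \<alpha>B by blast
  moreover have "\<forall>g\<in>carrier G. \<phi> g ` B = B \<or> \<phi> g ` B \<inter> B = {}"
  proof
    fix g assume g: "g \<in> carrier G"
    show "\<phi> g ` B = B \<or> \<phi> g ` B \<inter> B = {}"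
      unfolding B_def normal_subgroup_orbit_image[OF N g \<alpha>]
      using subgroup_orbits_disjoint_or_eq[OF N.subgroup_axioms act_closed[OF g \<alpha>] \<alpha>] by blast
  qed
  ultimately have "(\<exists>x. B = {x}) \<or> B = \<Omega>" by (rule blocks)
  then have "B = {\<alpha>} \<or> B = \<Omega>" using \<alpha>B by blast
  moreover have "B \<noteq> {\<alpha>}"
  proof
    assume "B = {\<alpha>}"
    then have "N = {\<one>\<^bsub>G\<^esub>}"
      using normal_subgroup_fixing_point_trivial[OF faithful transitive N \<alpha>] unfolding B_def by blast
    then show False using nontrivial by simp
  qed
  ultimately show ?thesis using \<beta> unfolding B_def by blast
qed

section \<open>Minimal normal subgroups and their simple factors\<close>

lemma minimal_normal_group_isomorphisms:
  assumes H: "group H" and F: "group F" and iso: "group_isomorphisms H F f f'"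
    and T: "minimal_normal H T"
  shows "minimal_normal F (f ` T)"
proof -
  interpret H: group H by fact
  interpret F: group F by fact
  have f: "f \<in> iso H F" and f': "f' \<in> iso F H"
    using iso group_isomorphisms_sym group_isomorphisms_imp_iso by blast+
  have f_one: "f \<one>\<^bsub>H\<^esub> = \<one>\<^bsub>F\<^esub>" and f'_one: "f' \<one>\<^bsub>F\<^esub> = \<one>\<^bsub>H\<^esub>"
    using iso H F by (simp_all add: group_isomorphisms_def group_hom_axioms_def group_hom_def group_hom.hom_one)
  have f'f: "f' ` f ` A = A" if "A \<subseteq> carrier H" for A
    using iso that unfolding group_isomorphisms_def by (force simp: image_image)
  have ff': "f ` f' ` A = A" if "A \<subseteq> carrier F" for A
    using iso that unfolding group_isomorphisms_def by (force simp: image_image)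
  have TH: "T \<lhd> H" and T1: "T \<noteq> {\<one>\<^bsub>H\<^esub>}"
    and Tmin: "\<And>K. K \<lhd> H \<Longrightarrow> K \<subseteq> T \<Longrightarrow> K = {\<one>\<^bsub>H\<^esub>} \<or> K = T"
    using T unfolding minimal_normal_def by blast+
  have Tc: "T \<subseteq> carrier H" using TH normal_imp_subgroup subgroup.subset by blast
  show ?thesis
    unfolding minimal_normal_def
  proof (intro conjI allI impI)
    show "f ` T \<lhd> F" by (rule iso_normal_subgroup[OF f H F TH])
    show "f ` T \<noteq> {\<one>\<^bsub>F\<^esub>}"
      using f'f[OF Tc] f'_one T1 by auto
    fix K assume K: "K \<lhd> F \<and> K \<subseteq> f ` T"
    have Kc: "K \<subseteq> carrier F" using K normal_imp_subgroup subgroup.subset by blast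
    have "f' ` K \<lhd> H" by (rule iso_normal_subgroup[OF f' F H]) (use K in blast)
    moreover have "f' ` K \<subseteq> T" using K f'f[OF Tc] by blast
    ultimately have "f' ` K = {\<one>\<^bsub>H\<^esub>} \<or> f' ` K = T" by (rule Tmin)
    then show "K = {\<one>\<^bsub>F\<^esub>} \<or> K = f ` T"
      using ff'[OF Kc] f_one by (metis image_empty image_insert)
  qed
qed

context group begin

lemma normal_in_subgroup_iff:
  assumes N: "subgroup N G"
  shows "K \<lhd> G\<lparr>carrier := N\<rparr> \<longleftrightarrow> subgroup K G \<and> K \<subseteq> N \<and> (\<forall>n\<in>N. \<forall>k\<in>K. n \<otimes> k \<otimes> inv n \<in> K)"
proof -
  interpret H: group "G\<lparr>carrier := N\<rparr>" using subgroup_imp_group[OF N] .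
  have "K \<lhd> G\<lparr>carrier := N\<rparr> \<longleftrightarrow>
      subgroup K (G\<lparr>carrier := N\<rparr>) \<and> (\<forall>n\<in>N. \<forall>k\<in>K. n \<otimes> k \<otimes> inv\<^bsub>G\<lparr>carrier := N\<rparr>\<^esub> n \<in> K)"
    using H.normal_inv_iff by simp
  also have "\<dots> \<longleftrightarrow> subgroup K G \<and> K \<subseteq> N \<and> (\<forall>n\<in>N. \<forall>k\<in>K. n \<otimes> k \<otimes> inv n \<in> K)"
  proof
    assume K: "subgroup K (G\<lparr>carrier := N\<rparr>) \<and> (\<forall>n\<in>N. \<forall>k\<in>K. n \<otimes> k \<otimes> inv\<^bsub>G\<lparr>carrier := N\<rparr>\<^esub> n \<in> K)"
    then have "K \<subseteq> N" using subgroup.subset by fastforce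
    then show "subgroup K G \<and> K \<subseteq> N \<and> (\<forall>n\<in>N. \<forall>k\<in>K. n \<otimes> k \<otimes> inv n \<in> K)"
      using K incl_subgroup[OF N] m_inv_consistent[OF N] by simp
  next
    assume K: "subgroup K G \<and> K \<subseteq> N \<and> (\<forall>n\<in>N. \<forall>k\<in>K. n \<otimes> k \<otimes> inv n \<in> K)"
    then show "subgroup K (G\<lparr>carrier := N\<rparr>) \<and> (\<forall>n\<in>N. \<forall>k\<in>K. n \<otimes> k \<otimes> inv\<^bsub>G\<lparr>carrier := N\<rparr>\<^esub> n \<in> K)"
      using subgroup_incl[OF _ N] m_inv_consistent[OF N] by simp
  qed
  finally show ?thesis .
qed

lemma exists_minimal_normal_subgroup:
  assumes fin: "finite (carrier G)" and L: "L \<lhd> G" "L \<noteq> {\<one>}"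
  shows "\<exists>T. minimal_normal G T \<and> T \<subseteq> L"
proof -
  define S where "S = {T. T \<lhd> G \<and> T \<noteq> {\<one>} \<and> T \<subseteq> L}"
  have "L \<in> S" unfolding S_def using L by blast
  then obtain T where T: "T \<in> S" and least: "\<And>T'. T' \<in> S \<Longrightarrow> card T \<le> card T'"
    using ex_has_least_nat[of "\<lambda>T. T \<in> S" L card] by blast
  have "T \<subseteq> carrier G" using T normal_imp_subgroup subgroup.subset unfolding S_def by blast
  then have "finite T" using fin by (rule finite_subset)
  have "K = T" if "K \<lhd> G" "K \<subseteq> T" "K \<noteq> {\<one>}" for K
  proof -
    have "K \<in> S" using that T unfolding S_def by blast
    then show "K = T" using least card_seteq[OF \<open>finite T\<close> \<open>K \<subseteq> T\<close>] by blast
  qed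
  then have "minimal_normal G T" using T unfolding minimal_normal_def S_def by blast
  then show ?thesis using T unfolding S_def by blast
qed

lemma minimal_normal_commute:
  assumes T: "minimal_normal G T" and T': "minimal_normal G T'" and "T \<noteq> T'"
    and "x \<in> T" "y \<in> T'"
  shows "x \<otimes> y = y \<otimes> x"
proof (rule normal_imp_commuting)
  show TG: "T \<lhd> G" and T'G: "T' \<lhd> G" using T T' unfolding minimal_normal_def by blast+
  have "T \<inter> T' \<lhd> G" by (rule normal_subgroup_intersect[OF TG T'G])
  then have "T \<inter> T' = {\<one>} \<or> T \<inter> T' = T" using T unfolding minimal_normal_def by blast
  moreover have "T \<inter> T' \<noteq> T"
  proof
    assume "T \<inter> T' = T"
    then have "T = {\<one>} \<or> T = T'" using T' TG unfolding minimal_normal_def by blast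
    then show False using T \<open>T \<noteq> T'\<close> unfolding minimal_normal_def by blast
  qed
  ultimately show "T \<inter> T' \<subseteq> {\<one>}" by blast
qed fact+

lemma commute_inv:
  assumes x: "x \<in> carrier G" and y: "y \<in> carrier G" and comm: "x \<otimes> y = y \<otimes> x"
  shows "inv x \<otimes> y = y \<otimes> inv x"
proof -
  have "inv x \<otimes> y = inv x \<otimes> (y \<otimes> x) \<otimes> inv x" using x y by (simp add: m_assoc)
  also have "\<dots> = y \<otimes> inv x" using x y by (simp flip: comm)
  finally show ?thesis .
qed

lemma subgroup_centralizer_in:
  assumes N: "subgroup N G" and T: "T \<subseteq> carrier G"
  shows "subgroup (centralizer_in G N T) G"
proof (rule subgroupI)
  interpret N: subgroup N G by fact
  show "centralizer_in G N T \<subseteq> carrier G" unfolding centralizer_in_def by auto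
  have "\<one> \<in> centralizer_in G N T" using T unfolding centralizer_in_def by auto
  then show "centralizer_in G N T \<noteq> {}" by blast
  fix x y assume x: "x \<in> centralizer_in G N T" and y: "y \<in> centralizer_in G N T"
  then have xN: "x \<in> N" and yN: "y \<in> N"
    and xT: "\<And>t. t \<in> T \<Longrightarrow> x \<otimes> t = t \<otimes> x" and yT: "\<And>t. t \<in> T \<Longrightarrow> y \<otimes> t = t \<otimes> y"
    unfolding centralizer_in_def by auto
  have "inv x \<otimes> t = t \<otimes> inv x" if "t \<in> T" for t
    using commute_inv[OF N.mem_carrier[OF xN] _ xT[OF that]] T that by blast
  then show "inv x \<in> centralizer_in G N T" using xN unfolding centralizer_in_def by simp
  have "x \<otimes> y \<otimes> t = t \<otimes> (x \<otimes> y)" if "t \<in> T" for t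
  proof -
    have t: "t \<in> carrier G" using T that by blast
    have "x \<otimes> y \<otimes> t = x \<otimes> (t \<otimes> y)" using xN yN t yT[OF that] by (simp add: m_assoc)
    also have "\<dots> = t \<otimes> (x \<otimes> y)" using xN yN t xT[OF that] by (simp add: m_assoc[symmetric])
    finally show ?thesis .
  qed
  then show "x \<otimes> y \<in> centralizer_in G N T" using xN yN unfolding centralizer_in_def by simp
qed

lemma generate_commute:
  assumes U: "U \<subseteq> carrier G" and V: "V \<subseteq> carrier G"
    and comm: "\<And>u v. u \<in> U \<Longrightarrow> v \<in> V \<Longrightarrow> u \<otimes> v = v \<otimes> u"
    and x: "x \<in> generate G U" and y: "y \<in> generate G V"
  shows "x \<otimes> y = y \<otimes> x"
proof -
  have "U \<subseteq> centralizer_in G (carrier G) V" using U comm unfolding centralizer_in_def by auto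
  then have "generate G U \<subseteq> centralizer_in G (carrier G) V"
    by (rule generate_subgroup_incl[OF _ subgroup_centralizer_in[OF subgroup_self V]])
  then have "V \<subseteq> centralizer_in G (carrier G) (generate G U)"
    using V unfolding centralizer_in_def by auto
  then have "generate G V \<subseteq> centralizer_in G (carrier G) (generate G U)"
    by (rule generate_subgroup_incl[OF _ subgroup_centralizer_in[OF subgroup_self generate_incl[OF U]]])
  then show ?thesis using x y unfolding centralizer_in_def by auto
qed

lemma conjugation_group_isomorphisms:
  assumes N: "N \<lhd> G" and g: "g \<in> carrier G"
  shows "group_isomorphisms (G\<lparr>carrier := N\<rparr>) (G\<lparr>carrier := N\<rparr>)
           (\<lambda>x. g \<otimes> x \<otimes> inv g) (\<lambda>x. inv g \<otimes> x \<otimes> g)"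
proof -
  interpret N: normal N G by fact
  have "(\<lambda>x. g \<otimes> x \<otimes> inv g) \<in> hom (G\<lparr>carrier := N\<rparr>) (G\<lparr>carrier := N\<rparr>)"
    using g N.inv_op_closed2[OF g] by (auto intro!: homI simp: m_assoc)
  moreover have "(\<lambda>x. inv g \<otimes> x \<otimes> g) \<in> hom (G\<lparr>carrier := N\<rparr>) (G\<lparr>carrier := N\<rparr>)"
    using g N.inv_op_closed1[OF g] by (auto intro!: homI simp: m_assoc)
  ultimately show ?thesis
    unfolding group_isomorphisms_def using g by (simp add: m_assoc)
qed

lemma simple_factorD:
  assumes N: "subgroup N G" and T: "T \<in> simple_factors G N"
  shows "T \<lhd> G\<lparr>carrier := N\<rparr>" "subgroup T G" "T \<subseteq> N" "T \<noteq> {\<one>}"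
proof -
  show TN: "T \<lhd> G\<lparr>carrier := N\<rparr>" and "T \<noteq> {\<one>}"
    using T unfolding simple_factors_def minimal_normal_def by auto
  then show "subgroup T G" "T \<subseteq> N" using normal_in_subgroup_iff[OF N] by blast+
qed

lemma conjugate_simple_factor:
  assumes N: "N \<lhd> G" and g: "g \<in> carrier G" and T: "T \<in> simple_factors G N"
  shows "(\<lambda>x. g \<otimes> x \<otimes> inv g) ` T \<in> simple_factors G N"
proof -
  have H: "group (G\<lparr>carrier := N\<rparr>)" using subgroup_imp_group[OF normal_imp_subgroup[OF N]] .
  have "minimal_normal (G\<lparr>carrier := N\<rparr>) ((\<lambda>x. g \<otimes> x \<otimes> inv g) ` T)"
    by (rule minimal_normal_group_isomorphisms[OF H H conjugation_group_isomorphisms[OF N g]])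
      (use T in \<open>simp add: simple_factors_def\<close>)
  then show ?thesis unfolding simple_factors_def by simp
qed

lemma generate_conjugation_closed_eq:
  assumes N: "minimal_normal G N" and U: "U \<subseteq> N"
    and closed: "\<And>g u. g \<in> carrier G \<Longrightarrow> u \<in> U \<Longrightarrow> g \<otimes> u \<otimes> inv g \<in> U"
    and u: "u \<in> U" "u \<noteq> \<one>"
  shows "generate G U = N"
proof -
  have NG: "N \<lhd> G" and Nmin: "\<And>K. K \<lhd> G \<Longrightarrow> K \<subseteq> N \<Longrightarrow> K = {\<one>} \<or> K = N"
    using N unfolding minimal_normal_def by blast+
  interpret N: normal N G by fact
  have Uc: "U \<subseteq> carrier G" using U N.subset by (rule subset_trans)
  have "generate G U \<lhd> G" by (rule normal_generateI[OF Uc closed])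
  moreover have "generate G U \<subseteq> N" by (rule generate_subgroup_incl[OF U N.subgroup_axioms])
  ultimately have "generate G U = {\<one>} \<or> generate G U = N" by (rule Nmin)
  moreover have "u \<in> generate G U" using u(1) by (rule generate.incl)
  ultimately show ?thesis using u(2) by blast
qed

lemma simple_factors_nonempty:
  assumes N: "subgroup N G" "finite N" "N \<noteq> {\<one>}"
  shows "simple_factors G N \<noteq> {}"
proof -
  interpret H: group "G\<lparr>carrier := N\<rparr>" using subgroup_imp_group[OF N(1)] .
  have "N \<lhd> G\<lparr>carrier := N\<rparr>" using H.normal_self by simp
  then show ?thesis
    using H.exists_minimal_normal_subgroup[of N] N unfolding simple_factors_def by auto
qed

lemma generate_simple_factors:
  assumes N: "minimal_normal G N" and fin: "finite N"
  shows "generate G (\<Union>(simple_factors G N)) = N"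
proof -
  have NG: "N \<lhd> G" and N1: "N \<noteq> {\<one>}" using N unfolding minimal_normal_def by blast+
  have sN: "subgroup N G" using NG by (rule normal_imp_subgroup)
  obtain T where T: "T \<in> simple_factors G N" using simple_factors_nonempty[OF sN fin N1] by blast
  obtain u where u: "u \<in> T" "u \<noteq> \<one>"
    using simple_factorD[OF sN T] subgroup.one_closed by blast
  show ?thesis
  proof (rule generate_conjugation_closed_eq[OF N])
    show "\<Union>(simple_factors G N) \<subseteq> N" using simple_factorD(3)[OF sN] by blast
    show "u \<in> \<Union>(simple_factors G N)" using T u by blast
    fix g v assume g: "g \<in> carrier G" and "v \<in> \<Union>(simple_factors G N)"
    then obtain T' where "T' \<in> simple_factors G N" "v \<in> T'" by blast
    then show "g \<otimes> v \<otimes> inv g \<in> \<Union>(simple_factors G N)"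
      using conjugate_simple_factor[OF NG g] by blast
  qed fact
qed

lemma simple_factors_commute:
  assumes N: "subgroup N G" and T: "T \<in> simple_factors G N" "T' \<in> simple_factors G N" "T \<noteq> T'"
    and x: "x \<in> T" and y: "y \<in> T'"
  shows "x \<otimes> y = y \<otimes> x"
proof -
  interpret H: group "G\<lparr>carrier := N\<rparr>" using subgroup_imp_group[OF N] .
  show ?thesis
    using H.minimal_normal_commute[OF _ _ T(3) x y] T(1,2) unfolding simple_factors_def by simp
qed

lemma abelian_set_conjugate:
  assumes g: "g \<in> carrier G" and T: "T \<subseteq> carrier G" "abelian_set G T"
  shows "abelian_set G ((\<lambda>x. g \<otimes> x \<otimes> inv g) ` T)"
  unfolding abelian_set_def
proof (clarify)
  have conj_mult: "g \<otimes> a \<otimes> inv g \<otimes> (g \<otimes> b \<otimes> inv g) = g \<otimes> (a \<otimes> b) \<otimes> inv g"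
    if "a \<in> carrier G" "b \<in> carrier G" for a b
    using that g by (simp add: m_assoc)
  fix x y assume xy: "x \<in> T" "y \<in> T"
  then have "x \<otimes> y = y \<otimes> x" using T(2) unfolding abelian_set_def by blast
  moreover have "x \<in> carrier G" "y \<in> carrier G" using xy T(1) by auto
  ultimately show "g \<otimes> x \<otimes> inv g \<otimes> (g \<otimes> y \<otimes> inv g) = g \<otimes> y \<otimes> inv g \<otimes> (g \<otimes> x \<otimes> inv g)"
    using conj_mult by simp
qed

lemma simple_factor_not_abelian:
  assumes N: "minimal_normal G N" and nonabelian: "\<not> abelian_set G N"
    and T: "T \<in> simple_factors G N"
  shows "\<not> abelian_set G T"
proof
  assume "abelian_set G T"
  have NG: "N \<lhd> G" using N unfolding minimal_normal_def by blast
  have sN: "subgroup N G" using NG by (rule normal_imp_subgroup)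
  define U where "U = \<Union>{T'\<in>simple_factors G N. abelian_set G T'}"
  have UN: "U \<subseteq> N" unfolding U_def using simple_factorD(3)[OF sN] by blast
  then have Uc: "U \<subseteq> carrier G" using subgroup.subset[OF sN] by (rule subset_trans)
  obtain u where "u \<in> T" and u1: "u \<noteq> \<one>"
    using simple_factorD[OF sN T] subgroup.one_closed by blast
  then have uU: "u \<in> U" using T \<open>abelian_set G T\<close> unfolding U_def by blast
  have "generate G U = N"
  proof (rule generate_conjugation_closed_eq[OF N UN _ uU u1])
    fix g v assume g: "g \<in> carrier G" and "v \<in> U"
    then obtain T' where T': "T' \<in> simple_factors G N" "abelian_set G T'" "v \<in> T'"
      unfolding U_def by blast
    have "T' \<subseteq> carrier G" using simple_factorD(3)[OF sN T'(1)] subgroup.subset[OF sN] by (rule subset_trans)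
    then have "abelian_set G ((\<lambda>x. g \<otimes> x \<otimes> inv g) ` T')" using g T'(2) by (intro abelian_set_conjugate)
    then show "g \<otimes> v \<otimes> inv g \<in> U"
      using conjugate_simple_factor[OF NG g T'(1)] T'(3) unfolding U_def by blast
  qed
  moreover have "x \<otimes> y = y \<otimes> x" if xy: "x \<in> U" "y \<in> U" for x y
  proof -
    obtain T1 T2 where T12: "T1 \<in> simple_factors G N" "abelian_set G T1" "x \<in> T1"
      "T2 \<in> simple_factors G N" "y \<in> T2"
      using xy unfolding U_def by blast
    show ?thesis
    proof (cases "T1 = T2")
      case True
      then show ?thesis using T12 unfolding abelian_set_def by blast
    next
      case False
      then show ?thesis by (rule simple_factors_commute[OF sN T12(1,4) _ T12(3,5)])
    qed
  qed
  ultimately have "abelian_set G N"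
    unfolding abelian_set_def using generate_commute[OF Uc Uc] by blast
  then show False using nonabelian by contradiction
qed

lemma abelian_normal_subgroup_trivial:
  assumes N: "minimal_normal G N" "\<not> abelian_set G N" "finite N"
    and L: "L \<lhd> G\<lparr>carrier := N\<rparr>" "abelian_set G L"
  shows "L = {\<one>}"
proof (rule ccontr)
  assume "L \<noteq> {\<one>}"
  have sN: "subgroup N G" using N(1) normal_imp_subgroup unfolding minimal_normal_def by blast
  interpret H: group "G\<lparr>carrier := N\<rparr>" using subgroup_imp_group[OF sN] .
  obtain T where T: "T \<in> simple_factors G N" "T \<subseteq> L"
    using H.exists_minimal_normal_subgroup[of L] N(3) L(1) \<open>L \<noteq> {\<one>}\<close>
    unfolding simple_factors_def by auto
  have "abelian_set G T" using L(2) T(2) unfolding abelian_set_def by blast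
  then show False using simple_factor_not_abelian[OF N(1,2) T(1)] by contradiction
qed

section \<open>Complements in products of commuting subgroups\<close>

lemma subgroup_set_mult_commuting:
  assumes A: "subgroup A G" and B: "subgroup B G"
    and comm: "\<And>a b. a \<in> A \<Longrightarrow> b \<in> B \<Longrightarrow> a \<otimes> b = b \<otimes> a"
  shows "subgroup (A <#> B) G"
proof (rule subgroupI)
  interpret A: subgroup A G by fact
  interpret B: subgroup B G by fact
  show "A <#> B \<subseteq> carrier G" by (rule setmult_subset_G[OF A.subset B.subset])
  show "A <#> B \<noteq> {}" using set_multI[OF A.one_closed B.one_closed] by blast
next
  interpret A: subgroup A G by fact
  interpret B: subgroup B G by fact
  fix x y assume "x \<in> A <#> B" "y \<in> A <#> B"
  then obtain a b a' b' where ab: "a \<in> A" "b \<in> B" "x = a \<otimes> b" and ab': "a' \<in> A" "b' \<in> B" "y = a' \<otimes> b'"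
    by (metis set_multE)
  have "inv x = inv a \<otimes> inv b" using ab comm[of "inv a" "inv b"] by (simp add: inv_mult_group)
  then show "inv x \<in> A <#> B" using ab by (simp add: set_multI)
  have "x \<otimes> y = a \<otimes> (b \<otimes> a') \<otimes> b'" using ab ab' by (simp add: m_assoc)
  also have "\<dots> = a \<otimes> (a' \<otimes> b) \<otimes> b'" using ab ab' comm[of a' b] by simp
  also have "\<dots> = (a \<otimes> a') \<otimes> (b \<otimes> b')" using ab ab' by (simp add: m_assoc)
  finally show "x \<otimes> y \<in> A <#> B" using ab ab' by (simp add: set_multI)
qed

lemma generate_Un_commuting_subgroups:
  assumes A: "subgroup A G" and B: "subgroup B G"
    and comm: "\<And>a b. a \<in> A \<Longrightarrow> b \<in> B \<Longrightarrow> a \<otimes> b = b \<otimes> a"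
  shows "generate G (A \<union> B) = A <#> B"
proof
  have "A \<union> B \<subseteq> A <#> B" using subset_set_mult_left[OF A B] subset_set_mult_right[OF A B] by blast
  then show "generate G (A \<union> B) \<subseteq> A <#> B"
    by (rule generate_subgroup_incl[OF _ subgroup_set_mult_commuting[OF A B comm]])
  show "A <#> B \<subseteq> generate G (A \<union> B)"
  proof
    fix x assume "x \<in> A <#> B"
    then obtain a b where "a \<in> A" "b \<in> B" "x = a \<otimes> b" by (rule set_multE)
    then show "x \<in> generate G (A \<union> B)" by (simp add: generate.eng generate.incl)
  qed
qed

lemma generate_UN_generate:
  assumes "\<And>i. i \<in> I \<Longrightarrow> A i \<subseteq> carrier G"
  shows "generate G (\<Union>i\<in>I. generate G (A i)) = generate G (\<Union>i\<in>I. A i)"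
proof
  have "(\<Union>i\<in>I. A i) \<subseteq> carrier G" using assms by blast
  moreover have "(\<Union>i\<in>I. generate G (A i)) \<subseteq> generate G (\<Union>i\<in>I. A i)"
    using mono_generate[of _ "\<Union>i\<in>I. A i"] by blast
  ultimately show "generate G (\<Union>i\<in>I. generate G (A i)) \<subseteq> generate G (\<Union>i\<in>I. A i)"
    using generate_subgroup_incl generate_is_subgroup by blast
  show "generate G (\<Union>i\<in>I. A i) \<subseteq> generate G (\<Union>i\<in>I. generate G (A i))"
    by (rule mono_generate) (auto intro: generate.incl)
qed

lemma generate_UN_insert_commuting:
  assumes Hi: "subgroup (H i) G" and HJ: "\<And>j. j \<in> J \<Longrightarrow> H j \<subseteq> carrier G"
    and comm: "\<And>x y. x \<in> H i \<Longrightarrow> y \<in> generate G (\<Union>(H ` J)) \<Longrightarrow> x \<otimes> y = y \<otimes> x"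
  shows "generate G (\<Union>(H ` insert i J)) = H i <#> generate G (\<Union>(H ` J))"
proof -
  have UJ: "\<Union>(H ` J) \<subseteq> carrier G" using HJ by blast
  have UiJ: "\<Union>(H ` insert i J) \<subseteq> carrier G" using HJ subgroup.subset[OF Hi] by blast
  have "generate G (\<Union>(H ` insert i J)) = generate G (H i \<union> generate G (\<Union>(H ` J)))"
  proof
    show "generate G (\<Union>(H ` insert i J)) \<subseteq> generate G (H i \<union> generate G (\<Union>(H ` J)))"
      by (rule mono_generate) (auto intro: generate.incl)
    have "generate G (\<Union>(H ` J)) \<subseteq> generate G (\<Union>(H ` insert i J))"
      by (rule mono_generate) blast
    moreover have "H i \<subseteq> generate G (\<Union>(H ` insert i J))" by (auto intro: generate.incl)
    ultimately show "generate G (H i \<union> generate G (\<Union>(H ` J))) \<subseteq> generate G (\<Union>(H ` insert i J))"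
      by (intro generate_subgroup_incl[OF _ generate_is_subgroup[OF UiJ]]) blast
  qed
  also have "\<dots> = H i <#> generate G (\<Union>(H ` J))"
    by (rule generate_Un_commuting_subgroups[OF Hi generate_is_subgroup[OF UJ] comm])
  finally show ?thesis .
qed

lemma set_mult_interchange:
  assumes "D1 \<subseteq> carrier G" "D2 \<subseteq> carrier G" "C1 \<subseteq> carrier G" "C2 \<subseteq> carrier G"
    and comm: "\<And>c d. c \<in> C1 \<Longrightarrow> d \<in> D2 \<Longrightarrow> c \<otimes> d = d \<otimes> c"
  shows "(D1 <#> D2) <#> (C1 <#> C2) = (D1 <#> C1) <#> (D2 <#> C2)"
proof -
  have swap: "D2 <#> C1 = C1 <#> D2"
  proof (intro equalityI subsetI)
    fix x assume "x \<in> D2 <#> C1"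
    then obtain d c where "d \<in> D2" "c \<in> C1" "x = d \<otimes> c" by (rule set_multE)
    then show "x \<in> C1 <#> D2" using comm[of c d] set_multI[of c C1 d D2] by simp
  next
    fix x assume "x \<in> C1 <#> D2"
    then obtain c d where "c \<in> C1" "d \<in> D2" "x = c \<otimes> d" by (rule set_multE)
    then show "x \<in> D2 <#> C1" using comm[of c d] set_multI[of d D2 c C1] by simp
  qed
  have "(D1 <#> D2) <#> (C1 <#> C2) = D1 <#> ((D2 <#> C1) <#> C2)"
    using assms(1-4) by (simp add: set_mult_assoc setmult_subset_G)
  also have "\<dots> = D1 <#> ((C1 <#> D2) <#> C2)" by (simp only: swap)
  also have "\<dots> = (D1 <#> C1) <#> (D2 <#> C2)"
    using assms(1-4) by (simp add: set_mult_assoc setmult_subset_G)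
  finally show ?thesis .
qed

lemma set_mult_complements_disjoint:
  assumes A: "subgroup A G" and B: "subgroup B G" and disj: "A \<inter> B = {\<one>}"
    and DC1: "complements G A D1 C1" and DC2: "complements G B D2 C2"
  shows "(D1 <#> D2) \<inter> (C1 <#> C2) = {\<one>}"
proof
  interpret A: subgroup A G by fact
  interpret B: subgroup B G by fact
  note D1 = complementsD[OF DC1] and D2 = complementsD[OF DC2]
  show "{\<one>} \<subseteq> (D1 <#> D2) \<inter> (C1 <#> C2)"
    using set_multI[OF subgroup.one_closed[OF D1(1)] subgroup.one_closed[OF D2(1)]]
      set_multI[OF subgroup.one_closed[OF D1(2)] subgroup.one_closed[OF D2(2)]] by simp
  show "(D1 <#> D2) \<inter> (C1 <#> C2) \<subseteq> {\<one>}"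
  proof
    fix x assume x: "x \<in> (D1 <#> D2) \<inter> (C1 <#> C2)"
    then obtain d1 d2 where d: "d1 \<in> D1" "d2 \<in> D2" "x = d1 \<otimes> d2" by (blast elim: set_multE)
    obtain c1 c2 where c: "c1 \<in> C1" "c2 \<in> C2" "x = c1 \<otimes> c2" using x by (blast elim: set_multE)
    have dA: "d1 \<in> A" "c1 \<in> A" and dB: "d2 \<in> B" "c2 \<in> B" using d c D1(5,6) D2(5,6) by blast+
    have "inv c1 \<otimes> (d1 \<otimes> d2) \<otimes> inv d2 = inv c1 \<otimes> (c1 \<otimes> c2) \<otimes> inv d2" using d(3) c(3) by simp
    then have "inv c1 \<otimes> d1 = c2 \<otimes> inv d2" using dA dB by (simp add: m_assoc)
    moreover have "inv c1 \<otimes> d1 \<in> A" "c2 \<otimes> inv d2 \<in> B" using dA dB by simp_all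
    ultimately have "inv c1 \<otimes> d1 = \<one>" "c2 \<otimes> inv d2 = \<one>" using disj by auto
    moreover have "d1 = c1 \<otimes> (inv c1 \<otimes> d1)" "c2 = (c2 \<otimes> inv d2) \<otimes> d2"
      using dA dB by (simp_all add: m_assoc)
    ultimately have "d1 = c1" "d2 = c2" using dA dB by simp_all
    then have "d1 = \<one>" "d2 = \<one>" using d c D1(4) D2(4) by auto
    then show "x \<in> {\<one>}" using d by simp
  qed
qed

lemma complements_set_mult:
  assumes A: "subgroup A G" and B: "subgroup B G"
    and comm: "\<And>a b. a \<in> A \<Longrightarrow> b \<in> B \<Longrightarrow> a \<otimes> b = b \<otimes> a" and disj: "A \<inter> B = {\<one>}"
    and DC1: "complements G A D1 C1" and DC2: "complements G B D2 C2"
  shows "complements G (A <#> B) (D1 <#> D2) (C1 <#> C2)"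
proof -
  note D1 = complementsD[OF DC1] and D2 = complementsD[OF DC2]
  have "subgroup (D1 <#> D2) G"
    by (rule subgroup_set_mult_commuting[OF D1(1) D2(1)]) (use comm D1(5) D2(5) in blast)
  moreover have "subgroup (C1 <#> C2) G"
    by (rule subgroup_set_mult_commuting[OF D1(2) D2(2)]) (use comm D1(6) D2(6) in blast)
  moreover have "(D1 <#> D2) <#> (C1 <#> C2) = (D1 <#> C1) <#> (D2 <#> C2)"
  proof (rule set_mult_interchange)
    show "D1 \<subseteq> carrier G" "D2 \<subseteq> carrier G" "C1 \<subseteq> carrier G" "C2 \<subseteq> carrier G"
      using D1(1,2) D2(1,2) subgroup.subset by blast+
    show "c \<otimes> d = d \<otimes> c" if "c \<in> C1" "d \<in> D2" for c d using comm that D1(6) D2(5) by blast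
  qed
  ultimately show ?thesis
    unfolding complements_def using D1(3) D2(3) set_mult_complements_disjoint[OF A B disj DC1 DC2] by simp
qed

lemma complements_generate_family:
  assumes fin: "finite I" and N: "\<And>i. i \<in> I \<Longrightarrow> subgroup (N i) G"
    and DC: "\<And>i. i \<in> I \<Longrightarrow> complements G (N i) (D i) (C i)"
    and comm: "\<And>i j x y. i \<in> I \<Longrightarrow> j \<in> I \<Longrightarrow> i \<noteq> j \<Longrightarrow> x \<in> N i \<Longrightarrow> y \<in> N j \<Longrightarrow> x \<otimes> y = y \<otimes> x"
    and indep: "\<And>i J. i \<in> I \<Longrightarrow> J \<subseteq> I \<Longrightarrow> i \<notin> J \<Longrightarrow> N i \<inter> generate G (\<Union>(N ` J)) = {\<one>}"
  shows "complements G (generate G (\<Union>(N ` I))) (generate G (\<Union>(D ` I))) (generate G (\<Union>(C ` I)))"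
proof -
  have "complements G (generate G (\<Union>(N ` J))) (generate G (\<Union>(D ` J))) (generate G (\<Union>(C ` J)))"
    if "J \<subseteq> I" for J
    using finite_subset[OF that fin] that
  proof (induction J rule: finite_subset_induct')
    case empty
    then show ?case by (simp add: complements_def generate_empty set_mult_def triv_subgroup)
  next
    case (insert i J)
    have commJ: "x \<otimes> y = y \<otimes> x" if "x \<in> N i" "y \<in> generate G (\<Union>(N ` J))" for x y
      using generate_commute[of "N i" "\<Union>(N ` J)" x y] that insert.hyps(2,3,4) comm
        N[THEN subgroup.subset] by (blast intro: generate.incl)
    have sub: "subgroup (generate G (\<Union>(H ` J))) G"
      and ins: "generate G (\<Union>(H ` insert i J)) = H i <#> generate G (\<Union>(H ` J))"
      if H: "\<forall>j\<in>I. subgroup (H j) G \<and> H j \<subseteq> N j" for H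
    proof -
      have Hc: "H j \<subseteq> carrier G" if "j \<in> J" for j
        using H that insert.hyps(3) subgroup.subset by blast
      show "subgroup (generate G (\<Union>(H ` J))) G" using Hc by (blast intro: generate_is_subgroup)
      have le: "generate G (\<Union>(H ` J)) \<subseteq> generate G (\<Union>(N ` J))"
        using H insert.hyps(3) by (intro mono_generate) blast
      have "subgroup (H i) G" using H insert.hyps(2) by blast
      then show "generate G (\<Union>(H ` insert i J)) = H i <#> generate G (\<Union>(H ` J))"
      proof (rule generate_UN_insert_commuting[OF _ Hc])
        show "x \<otimes> y = y \<otimes> x" if "x \<in> H i" "y \<in> generate G (\<Union>(H ` J))" for x y
          using commJ that H insert.hyps(2) le by blast
      qed
    qed
    have N': "\<forall>j\<in>I. subgroup (N j) G \<and> N j \<subseteq> N j" using N by blast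
    have D': "\<forall>j\<in>I. subgroup (D j) G \<and> D j \<subseteq> N j" using complementsD(1,5)[OF DC] by blast
    have C': "\<forall>j\<in>I. subgroup (C j) G \<and> C j \<subseteq> N j" using complementsD(2,6)[OF DC] by blast
    have IH: "complements G (generate G (\<Union>(N ` J))) (generate G (\<Union>(D ` J))) (generate G (\<Union>(C ` J)))"
      using insert.IH insert.hyps(3) by blast
    show ?case unfolding ins[OF N'] ins[OF D'] ins[OF C']
      by (rule complements_set_mult[OF N[OF insert.hyps(2)] sub[OF N'] commJ indep[OF insert.hyps(2,3,4)]
            DC[OF insert.hyps(2)] IH])
  qed
  then show ?thesis by blast
qed

section \<open>Complements of diagonal subgroups\<close>

lemma full_diagonal_complement:
  assumes M: "subgroup M G" "finite M" and diagonal: "full_diagonal G M D"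
  shows "\<exists>C. complements G M D C"
proof (cases "M = {\<one>}")
  case True
  have "D \<subseteq> M" "\<one> \<in> D" using diagonal subgroup.one_closed unfolding full_diagonal_def by blast+
  then have "D = {\<one>}" using True by blast
  then have "complements G M D {\<one>}" using True triv_subgroup by (simp add: complements_def set_mult_def)
  then show ?thesis ..
next
  case False
  then obtain T where T: "T \<in> simple_factors G M" using simple_factors_nonempty[OF M] by blast
  have "T \<subseteq> carrier G" using simple_factorD(3)[OF M(1) T] subgroup.subset[OF M(1)] by (rule subset_trans)
  then have "subgroup (centralizer_in G M T) G" by (rule subgroup_centralizer_in[OF M(1)])
  then have "complements G M D (centralizer_in G M T)"
    using diagonal T unfolding full_diagonal_def complements_def by blast
  then show ?thesis ..
qed

lemma simple_factors_generate_normal: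
  assumes N: "subgroup N G" and A: "A \<subseteq> simple_factors G N"
  shows "generate G (\<Union>A) \<lhd> G\<lparr>carrier := N\<rparr>"
proof -
  interpret H: group "G\<lparr>carrier := N\<rparr>" using subgroup_imp_group[OF N] .
  have UN: "\<Union>A \<subseteq> N" using A simple_factorD(3)[OF N] by blast
  have "generate (G\<lparr>carrier := N\<rparr>) (\<Union>A) \<lhd> G\<lparr>carrier := N\<rparr>"
  proof (rule H.normal_generateI)
    show "\<Union>A \<subseteq> carrier (G\<lparr>carrier := N\<rparr>)" using UN by simp
    fix h g assume "h \<in> \<Union>A" and g: "g \<in> carrier (G\<lparr>carrier := N\<rparr>)"
    then obtain T where T: "T \<in> A" "h \<in> T" by blast
    have "T \<lhd> G\<lparr>carrier := N\<rparr>" using simple_factorD(1)[OF N] A T(1) by blast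
    then show "g \<otimes>\<^bsub>G\<lparr>carrier := N\<rparr>\<^esub> h \<otimes>\<^bsub>G\<lparr>carrier := N\<rparr>\<^esub> inv\<^bsub>G\<lparr>carrier := N\<rparr>\<^esub> g \<in> \<Union>A"
      using normal.inv_op_closed2[OF _ g T(2)] T(1) by blast
  qed
  then show ?thesis using generate_consistent[OF UN N] by simp
qed

lemma simple_factors_generate_commute:
  assumes N: "subgroup N G" and A: "A \<subseteq> simple_factors G N" and A': "A' \<subseteq> simple_factors G N"
    and disj: "A \<inter> A' = {}" and x: "x \<in> generate G (\<Union>A)" and y: "y \<in> generate G (\<Union>A')"
  shows "x \<otimes> y = y \<otimes> x"
proof (rule generate_commute[OF _ _ _ x y])
  have "\<Union>(simple_factors G N) \<subseteq> carrier G"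
    using simple_factorD(3)[OF N] subgroup.subset[OF N] by blast
  then show "\<Union>A \<subseteq> carrier G" "\<Union>A' \<subseteq> carrier G" using A A' by blast+
  fix u v assume "u \<in> \<Union>A" "v \<in> \<Union>A'"
  then obtain T T' where T: "T \<in> A" "u \<in> T" and T': "T' \<in> A'" "v \<in> T'" by blast
  have "T \<noteq> T'" using disj T(1) T'(1) by blast
  then show "u \<otimes> v = v \<otimes> u"
    by (rule simple_factors_commute[OF N subsetD[OF A T(1)] subsetD[OF A' T'(1)] _ T(2) T'(2)])
qed

lemma simple_factors_generate_disjoint:
  assumes N: "minimal_normal G N" "\<not> abelian_set G N" "finite N"
    and A: "A \<subseteq> simple_factors G N" and A': "A' \<subseteq> simple_factors G N" and disj: "A \<inter> A' = {}"
  shows "generate G (\<Union>A) \<inter> generate G (\<Union>A') = {\<one>}"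
proof (rule abelian_normal_subgroup_trivial[OF N])
  have sN: "subgroup N G" using N(1) normal_imp_subgroup unfolding minimal_normal_def by blast
  interpret H: group "G\<lparr>carrier := N\<rparr>" using subgroup_imp_group[OF sN] .
  show "generate G (\<Union>A) \<inter> generate G (\<Union>A') \<lhd> G\<lparr>carrier := N\<rparr>"
    by (rule H.normal_subgroup_intersect[OF simple_factors_generate_normal[OF sN A]
          simple_factors_generate_normal[OF sN A']])
  show "abelian_set G (generate G (\<Union>A) \<inter> generate G (\<Union>A'))"
    unfolding abelian_set_def using simple_factors_generate_commute[OF sN A A' disj] by blast
qed

lemma finite_simple_factors:
  assumes "finite N"
  shows "finite (simple_factors G N)"
proof (rule finite_subset)
  show "simple_factors G N \<subseteq> Pow N"
    unfolding simple_factors_def minimal_normal_def using normal_imp_subgroup subgroup.subset by fastforce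
qed (simp add: assms)

lemma simple_factor_blocks_disjoint:
  assumes N: "minimal_normal G N" "\<not> abelian_set G N" "finite N"
    and P: "disjoint P" "\<Union>P = simple_factors G N" and B: "B \<in> P" and J: "J \<subseteq> P" "B \<notin> J"
  shows "generate G (\<Union>B) \<inter> generate G (\<Union>B'\<in>J. generate G (\<Union>B')) = {\<one>}"
proof -
  have sN: "subgroup N G" using N(1) normal_imp_subgroup unfolding minimal_normal_def by blast
  have "\<Union>(simple_factors G N) \<subseteq> carrier G"
    using simple_factorD(3)[OF sN] subgroup.subset[OF sN] by blast
  then have "generate G (\<Union>B'\<in>J. generate G (\<Union>B')) = generate G (\<Union>B'\<in>J. \<Union>B')"
    using J(1) P(2) by (intro generate_UN_generate) blast
  also have "(\<Union>B'\<in>J. \<Union>B') = \<Union>(\<Union>J)" by blast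
  finally show ?thesis
    using simple_factors_generate_disjoint[OF N, of B "\<Union>J"] disjointD[OF P(1)] B J P(2) by blast
qed

lemma complement_of_diagonal_product:
  assumes fin: "finite (carrier G)" and N: "minimal_normal G N" and nonabelian: "\<not> abelian_set G N"
    and P: "disjoint P" "\<Union>P = simple_factors G N"
    and diagonal: "\<And>B. B \<in> P \<Longrightarrow> full_diagonal G (generate G (\<Union>B)) (D B)"
  shows "\<exists>K. complements G N (generate G (\<Union>(D ` P))) K"
proof -
  have sN: "subgroup N G" using N normal_imp_subgroup unfolding minimal_normal_def by blast
  have finN: "finite N" using fin subgroup.subset[OF sN] by (rule rev_finite_subset)
  define NB where "NB B = generate G (\<Union>B)" for B
  have factors: "B \<subseteq> simple_factors G N" if "B \<in> P" for B using that P(2) by blast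
  have BN: "\<Union>B \<subseteq> N" if "B \<in> P" for B using factors[OF that] simple_factorD(3)[OF sN] by blast
  have NB: "subgroup (NB B) G" if "B \<in> P" for B
    unfolding NB_def using BN[OF that] subgroup.subset[OF sN] by (auto intro: generate_is_subgroup)
  have NBN: "NB B \<subseteq> N" if "B \<in> P" for B
    unfolding NB_def using BN[OF that] by (rule generate_subgroup_incl[OF _ sN])
  have "\<exists>C. complements G (NB B) (D B) C" if "B \<in> P" for B
    using full_diagonal_complement[OF NB[OF that] rev_finite_subset[OF finN NBN[OF that]]]
      diagonal[OF that] unfolding NB_def by blast
  then obtain C where C: "\<And>B. B \<in> P \<Longrightarrow> complements G (NB B) (D B) (C B)" by metis
  have finP: "finite P" using finite_simple_factors[OF finN] P(2) by (metis finite_UnionD)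
  have comm: "x \<otimes> y = y \<otimes> x" if "B \<in> P" "B' \<in> P" "B \<noteq> B'" "x \<in> NB B" "y \<in> NB B'" for B B' x y
    using simple_factors_generate_commute[OF sN factors factors] disjointD[OF P(1)] that
    unfolding NB_def by blast
  have indep: "NB B \<inter> generate G (\<Union>(NB ` J)) = {\<one>}" if "B \<in> P" "J \<subseteq> P" "B \<notin> J" for B J
    unfolding NB_def by (rule simple_factor_blocks_disjoint[OF N nonabelian finN P that])
  have "generate G (\<Union>(NB ` P)) = generate G (\<Union>B\<in>P. \<Union>B)"
    unfolding NB_def using BN subgroup.subset[OF sN] by (intro generate_UN_generate) blast
  also have "(\<Union>B\<in>P. \<Union>B) = \<Union>(simple_factors G N)" using P(2) by blast
  also have "generate G (\<Union>(simple_factors G N)) = N" by (rule generate_simple_factors[OF N finN])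
  finally have "generate G (\<Union>(NB ` P)) = N" .
  moreover have "complements G (generate G (\<Union>(NB ` P))) (generate G (\<Union>(D ` P))) (generate G (\<Union>(C ` P)))"
    by (rule complements_generate_family[OF finP]) (fact NB C comm indep)+
  ultimately show ?thesis by auto
qed

end

section \<open>The O'Nan--Scott types HA, HS, HC, TW, SD and CD\<close>

lemma regular_normal_subgroup_if_type_HA_HS_HC_TW:
  assumes "type_HA G \<Omega> \<phi> \<or> type_HS G \<Omega> \<phi> \<or> type_HC G \<Omega> \<phi> \<or> type_TW G \<Omega> \<phi>"
  shows "\<exists>N. N \<lhd> G \<and> regular_on G \<Omega> \<phi> N"
proof -
  have "\<exists>N. minimal_normal G N \<and> regular_on G \<Omega> \<phi> N"
    using assms unfolding type_HA_def type_HS_def type_HC_def type_TW_def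
      unique_minimal_normal_def two_minimal_normal_def by (elim disjE exE conjE) blast+
  then show ?thesis unfolding minimal_normal_def by blast
qed

context group begin

lemma stabilizer_complement_if_type_SD_CD:
  assumes fin: "finite (carrier G)" and type: "type_SD G \<Omega> \<phi> \<or> type_CD G \<Omega> \<phi>"
  obtains N \<alpha> K where "minimal_normal G N" "\<alpha> \<in> \<Omega>" "complements G N (N \<inter> stabilizer G \<phi> \<alpha>) K"
  using type
proof
  assume "type_SD G \<Omega> \<phi>"
  then obtain N \<alpha> where "unique_minimal_normal G N" and \<alpha>: "\<alpha> \<in> \<Omega>"
    and diagonal: "full_diagonal G N (N \<inter> stabilizer G \<phi> \<alpha>)"
    unfolding type_SD_def by (elim exE conjE bexE)
  then have N: "minimal_normal G N" unfolding unique_minimal_normal_def by (elim conjE)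
  have sN: "subgroup N G" using N normal_imp_subgroup unfolding minimal_normal_def by blast
  show thesis
    using full_diagonal_complement[OF sN rev_finite_subset[OF fin subgroup.subset[OF sN]] diagonal]
      that[OF N \<alpha>] by blast
next
  assume "type_CD G \<Omega> \<phi>"
  then obtain N \<alpha> P D m where "unique_minimal_normal G N" and nonabelian: "\<not> abelian_set G N"
    and \<alpha>: "\<alpha> \<in> \<Omega>" and P: "disjoint P" "\<Union>P = simple_factors G N"
    and blocks: "\<forall>B\<in>P. card B = m \<and> full_diagonal G (generate G (\<Union>B)) (D B)"
    and stabilizer: "N \<inter> stabilizer G \<phi> \<alpha> = generate G (\<Union>(D ` P))"
    unfolding type_CD_def by (elim exE conjE bexE)
  then have N: "minimal_normal G N" unfolding unique_minimal_normal_def by (elim conjE)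
  have diagonal: "full_diagonal G (generate G (\<Union>B)) (D B)" if "B \<in> P" for B
    using blocks that by blast
  show thesis
    using complement_of_diagonal_product[OF fin N nonabelian P diagonal] that[OF N \<alpha>]
    unfolding stabilizer by blast
qed

end

lemma exists_regular_subgroup:
  assumes prim: "primitive_action G \<Omega> \<phi>" and fin: "finite \<Omega>"
    and type: "type_HA G \<Omega> \<phi> \<or> type_HS G \<Omega> \<phi> \<or> type_HC G \<Omega> \<phi> \<or>
               type_TW G \<Omega> \<phi> \<or> type_SD G \<Omega> \<phi> \<or> type_CD G \<Omega> \<phi>"
  obtains K where "subgroup K G" "regular_on G \<Omega> \<phi> K"
proof -
  interpret group_action G \<Omega> \<phi> using prim unfolding primitive_action_def by (elim conjE)
  consider "type_HA G \<Omega> \<phi> \<or> type_HS G \<Omega> \<phi> \<or> type_HC G \<Omega> \<phi> \<or> type_TW G \<Omega> \<phi>"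
    | "type_SD G \<Omega> \<phi> \<or> type_CD G \<Omega> \<phi>" using type by blast
  then show thesis
  proof cases
    case 1
    then show thesis using regular_normal_subgroup_if_type_HA_HS_HC_TW normal_imp_subgroup that by blast
  next
    case 2
    have "finite (carrier G)"
      using finite_carrier_if_faithful prim fin unfolding primitive_action_def by (elim conjE)
    then obtain N \<alpha> K where N: "minimal_normal G N" and \<alpha>: "\<alpha> \<in> \<Omega>"
      and complement: "complements G N (N \<inter> stabilizer G \<phi> \<alpha>) K"
      using stabilizer_complement_if_type_SD_CD 2 by metis
    have NG: "N \<lhd> G" and N1: "N \<noteq> {\<one>\<^bsub>G\<^esub>}" using N unfolding minimal_normal_def by blast+
    have "regular_on G \<Omega> \<phi> K"
    proof (rule regular_on_if_complement_of_stabilizer[OF normal_imp_subgroup[OF NG] \<alpha> _ complement])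
      show "\<exists>n\<in>N. \<phi> n \<alpha> = \<beta>" if "\<beta> \<in> \<Omega>" for \<beta>
        by (rule primitive_action_normal_subgroup_transitive[OF prim NG N1 \<alpha> that])
    qed
    with complementsD(2)[OF complement] show thesis by (rule that)
  qed
qed

theorem theorem1p4:
  fixes G :: "('a, 'c) monoid_scheme" and \<Omega> :: "'b set" and \<phi> :: "'a \<Rightarrow> 'b \<Rightarrow> 'b"
  assumes "primitive_action G \<Omega> \<phi>"
    and "finite \<Omega>"
    and "type_HA G \<Omega> \<phi> \<or> type_HS G \<Omega> \<phi> \<or> type_HC G \<Omega> \<phi> \<or>
         type_TW G \<Omega> \<phi> \<or> type_SD G \<Omega> \<phi> \<or> type_CD G \<Omega> \<phi>"
    and "\<alpha> \<in> \<Omega>"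
  shows "perfect_code_of_group G (stabilizer G \<phi> \<alpha>)"
proof -
  interpret group_action G \<Omega> \<phi> using assms(1) unfolding primitive_action_def by (elim conjE)
  obtain K where "subgroup K G" "regular_on G \<Omega> \<phi> K"
    by (rule exists_regular_subgroup[OF assms(1-3)])
  then show ?thesis using assms(4) by (rule perfect_code_stabilizer_if_regular)
qed

end
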